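(* Let $a^\circ_{n,k}(1324)$ be the number of cyclic permutations $\pi\in\mathfrak S_n$ whose one-line notation avoids $\delta_k=k(k-1)\cdots21$ and such that every cyclic rotation of the cycle form $C(\pi)$ avoids $1324$. Then for $n\ge3$, $a^\circ_{n,3}(1324)=2^{n-2}$, and for $k\ge4$, $a^\circ_{n,k}(1324)=F_{2n-3}$, where $F_m$ is the $m$th Fibonacci number ($F_1=F_2=1$, $F_{m}=F_{m-1}+F_{m-2}$).
   Context: A permutation $\pi\in\mathfrak S_n$ is cyclic if it consists of a single $n$-cycle. For cyclic $\pi$, $C(\pi)=(1,c_2,\dots,c_n)$ with $c_2=\pi(1)$, $c_{i+1}=\pi(c_i)$; its cyclic rotations are the sequences $c_ic_{i+1}\cdots c_nc_1\cdots c_{i-1}$ (with $c_1=1$). A sequence avoids a pattern $\sigma\in\mathfrak S_m$ if no subsequence of length $m$ is in the same relative order as $\sigma$. The one-line notation of $\pi$ is $\pi_1\cdots\pi_n$, $\pi_i=\pi(i)$. *)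

theory Defs
  imports "HOL-Combinatorics.Permutations" "HOL-Number_Theory.Fib"
begin

definition cyclic_perm :: "nat \<Rightarrow> (nat \<Rightarrow> nat) \<Rightarrow> bool" where
  "cyclic_perm n p \<longleftrightarrow> p permutes {1..n} \<and> {1..n} \<subseteq> {(p ^^ i) 1 | i. True}"

definition one_line :: "nat \<Rightarrow> (nat \<Rightarrow> nat) \<Rightarrow> nat list" where
  "one_line n p = map p [1..<n+1]"

definition cycle_form :: "nat \<Rightarrow> (nat \<Rightarrow> nat) \<Rightarrow> nat list" where
  "cycle_form n p = map (\<lambda>i. (p ^^ i) 1) [0..<n]"

definition contains_pat :: "nat list \<Rightarrow> nat list \<Rightarrow> bool" where
  "contains_pat w \<sigma> \<longleftrightarrow> (\<exists>f :: nat \<Rightarrow> nat.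
      (\<forall>a b. a < b \<and> b < length \<sigma> \<longrightarrow> f a < f b) \<and>
      (\<forall>a < length \<sigma>. f a < length w) \<and>
      (\<forall>a b. a < length \<sigma> \<and> b < length \<sigma> \<longrightarrow> (w ! f a < w ! f b \<longleftrightarrow> \<sigma> ! a < \<sigma> ! b)))"

definition avoids :: "nat list \<Rightarrow> nat list \<Rightarrow> bool" where
  "avoids w \<sigma> \<longleftrightarrow> \<not> contains_pat w \<sigma>"

definition delta :: "nat \<Rightarrow> nat list" where
  "delta k = rev [1..<k+1]"

definition a_circ :: "nat \<Rightarrow> nat \<Rightarrow> nat" where
  "a_circ n k = card {p. cyclic_perm n p \<and> avoids (one_line n p) (delta k) \<and>
      (\<forall>j < n. avoids (rotate j (cycle_form n p)) [1,3,2,4])}"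

end

theory Submission
  imports Defs "HOL-Combinatorics.Cycles"
begin

(*
  Write C(pi) = 1 w.  As 1 is the smallest entry, all rotations of 1 w avoid 1324 iff w avoids
  both 213 and 4132.  A word on an interval avoiding these two patterns is either lo b, or a
  followed by the increasing block lo, lo+1, ..., lo+j, with a lying above the block; hence
  there are F(2m-1) such words of length m.

  The one-line notation of pi contains delta_k iff the graph of pi has k points that decrease
  from left to right, and this graph is the edge set of the closed path 1 -> w -> 1.  Following
  the decomposition of w, such a path never has 4 decreasing edges, and it has 3 unless w is
  built by placing the successive minima at either end, which leaves 2^(m-1) words.
*)

lemma contains_pat_iff_indices:
  "contains_pat w \<sigma> \<longleftrightarrow>
     (\<exists>is. length is = length \<sigma> \<and> sorted_wrt (<) is \<and> (\<forall>i\<in>set is. i < length w) \<and>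
       (\<forall>a<length \<sigma>. \<forall>b<length \<sigma>. w ! (is ! a) < w ! (is ! b) \<longleftrightarrow> \<sigma> ! a < \<sigma> ! b))"
  (is "_ \<longleftrightarrow> (\<exists>is. ?occ is)")
proof
  assume "contains_pat w \<sigma>"
  then obtain f where "\<forall>a b. a < b \<and> b < length \<sigma> \<longrightarrow> f a < f b" "\<forall>a < length \<sigma>. f a < length w"
    "\<forall>a b. a < length \<sigma> \<and> b < length \<sigma> \<longrightarrow> (w ! f a < w ! f b \<longleftrightarrow> \<sigma> ! a < \<sigma> ! b)"
    unfolding contains_pat_def by blast
  then show "\<exists>is. ?occ is"
    by (intro exI[of _ "map f [0..<length \<sigma>]"]) (auto simp: sorted_wrt_iff_nth_less)
next
  assume "\<exists>is. ?occ is"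
  then obtain "is" where "?occ is" ..
  then show "contains_pat w \<sigma>"
    unfolding contains_pat_def by (intro exI[of _ "(!) is"]) (auto simp: sorted_wrt_iff_nth_less)
qed

lemma contains_pat_213_iff:
  "contains_pat w [2,1,3] \<longleftrightarrow>
     (\<exists>i j k. i < j \<and> j < k \<and> k < length w \<and> w!j < w!i \<and> w!i < w!k)"
  (is "_ \<longleftrightarrow> ?occ")
proof
  assume "contains_pat w [2,1,3]"
  then show ?occ
    by (auto simp: contains_pat_iff_indices numeral_eq_Suc length_Suc_conv less_Suc_eq
        all_conj_distrib) blast
next
  assume ?occ
  then obtain i j k where "i < j \<and> j < k \<and> k < length w \<and> w!j < w!i \<and> w!i < w!k" by blast
  then show "contains_pat w [2,1,3]"
    unfolding contains_pat_iff_indices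
    by (intro exI[of _ "[i,j,k]"]) (auto simp: numeral_eq_Suc less_Suc_eq)
qed

lemma contains_pat_4132_iff:
  "contains_pat w [4,1,3,2] \<longleftrightarrow>
     (\<exists>i j k l. i < j \<and> j < k \<and> k < l \<and> l < length w \<and> w!j < w!l \<and> w!l < w!k \<and> w!k < w!i)"
  (is "_ \<longleftrightarrow> ?occ")
proof
  assume "contains_pat w [4,1,3,2]"
  then show ?occ
    by (auto simp: contains_pat_iff_indices numeral_eq_Suc length_Suc_conv less_Suc_eq
        all_conj_distrib) blast
next
  assume ?occ
  then obtain i j k l
    where "i < j \<and> j < k \<and> k < l \<and> l < length w \<and> w!j < w!l \<and> w!l < w!k \<and> w!k < w!i"
    by blast
  then show "contains_pat w [4,1,3,2]"
    unfolding contains_pat_iff_indices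
    by (intro exI[of _ "[i,j,k,l]"]) (auto simp: numeral_eq_Suc less_Suc_eq)
qed

lemma contains_pat_1324_iff:
  "contains_pat w [1,3,2,4] \<longleftrightarrow>
     (\<exists>i j k l. i < j \<and> j < k \<and> k < l \<and> l < length w \<and> w!i < w!k \<and> w!k < w!j \<and> w!j < w!l)"
  (is "_ \<longleftrightarrow> ?occ")
proof
  assume "contains_pat w [1,3,2,4]"
  then show ?occ
    by (auto simp: contains_pat_iff_indices numeral_eq_Suc length_Suc_conv less_Suc_eq
        all_conj_distrib) blast
next
  assume ?occ
  then obtain i j k l
    where "i < j \<and> j < k \<and> k < l \<and> l < length w \<and> w!i < w!k \<and> w!k < w!j \<and> w!j < w!l"
    by blast
  then show "contains_pat w [1,3,2,4]"
    unfolding contains_pat_iff_indices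
    by (intro exI[of _ "[i,j,k,l]"]) (auto simp: numeral_eq_Suc less_Suc_eq)
qed

lemma not_contains_pat_Nil: "\<sigma> \<noteq> [] \<Longrightarrow> \<not> contains_pat [] \<sigma>"
  by (auto simp: contains_pat_iff_indices)

lemma contains_pat_append_left:
  assumes "contains_pat a \<sigma>" shows "contains_pat (a @ u) \<sigma>"
proof -
  obtain "is" where "length is = length \<sigma>" "sorted_wrt (<) is" "\<forall>i\<in>set is. i < length a"
    "\<forall>x<length \<sigma>. \<forall>y<length \<sigma>. a ! (is ! x) < a ! (is ! y) \<longleftrightarrow> \<sigma> ! x < \<sigma> ! y"
    using assms unfolding contains_pat_iff_indices by blast
  then show ?thesis
    unfolding contains_pat_iff_indices by (intro exI[of _ "is"]) (auto simp: nth_append)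
qed

lemma contains_pat_Cons_min:
  assumes min: "\<forall>y\<in>set w. x < y" and \<sigma>: "a < length \<sigma>" "\<sigma> ! a < \<sigma> ! 0"
  shows "contains_pat (x # w) \<sigma> \<longleftrightarrow> contains_pat w \<sigma>"
proof
  assume "contains_pat (x # w) \<sigma>"
  then obtain "is" where len: "length is = length \<sigma>" and sorted: "sorted_wrt (<) is"
    and bound: "\<forall>i\<in>set is. i < length (x # w)"
    and iso: "\<forall>a<length \<sigma>. \<forall>b<length \<sigma>.
      (x # w) ! (is ! a) < (x # w) ! (is ! b) \<longleftrightarrow> \<sigma> ! a < \<sigma> ! b"
    unfolding contains_pat_iff_indices by blast
  have "0 \<notin> set is"
  proof
    assume "0 \<in> set is"
    then obtain b where "b < length is" "is ! b = 0" by (auto simp: in_set_conv_nth)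
    then have "is ! 0 = 0"
      using sorted by (metis gr_implies_not0 gr0I sorted_wrt_iff_nth_less)
    moreover have "a \<noteq> 0" using \<sigma>(2) by (metis less_irrefl)
    then have "is ! 0 < is ! a" using sorted \<sigma>(1) len by (simp add: sorted_wrt_iff_nth_less)
    moreover have "is ! a < length (x # w)" using bound \<sigma>(1) len by simp
    ultimately have "(x # w) ! (is ! 0) < (x # w) ! (is ! a)"
      using min by (auto simp: nth_Cons' split: if_splits)
    then show False using iso \<sigma> by (metis length_pos_if_in_set less_asym \<open>0 \<in> set is\<close> len)
  qed
  then obtain js where "is = map Suc js"
    by (metis ex_map_conv not0_implies_Suc)
  with len sorted bound iso show "contains_pat w \<sigma>"
    unfolding contains_pat_iff_indices by (intro exI[of _ js]) (simp add: sorted_wrt_map)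
next
  assume "contains_pat w \<sigma>"
  then obtain "is" where "length is = length \<sigma>" "sorted_wrt (<) is" "\<forall>i\<in>set is. i < length w"
    "\<forall>a<length \<sigma>. \<forall>b<length \<sigma>. w ! (is ! a) < w ! (is ! b) \<longleftrightarrow> \<sigma> ! a < \<sigma> ! b"
    unfolding contains_pat_iff_indices by blast
  then show "contains_pat (x # w) \<sigma>"
    unfolding contains_pat_iff_indices by (intro exI[of _ "map Suc is"]) (simp add: sorted_wrt_map)
qed

section \<open>Decreasing chains of points\<close>

definition decreasing_chain :: "nat \<Rightarrow> (nat \<times> nat) set \<Rightarrow> bool" where
  "decreasing_chain k E \<longleftrightarrow>
     (\<exists>ps. length ps = k \<and> set ps \<subseteq> E \<and> sorted_wrt (\<lambda>p q. fst p < fst q \<and> snd q < snd p) ps)"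

lemma decreasing_chain_mono:
  assumes "decreasing_chain l E" "k \<le> l" "E \<subseteq> F"
  shows "decreasing_chain k F"
proof -
  obtain ps where "length ps = l" "set ps \<subseteq> E"
    "sorted_wrt (\<lambda>p q. fst p < fst q \<and> snd q < snd p) ps"
    using assms(1) unfolding decreasing_chain_def by blast
  with assms(2,3) show ?thesis
    unfolding decreasing_chain_def
    by (intro exI[of _ "take k ps"]) (auto simp: sorted_wrt_take dest: in_set_takeD)
qed

lemma decreasing_chain_3_iff:
  "decreasing_chain 3 E \<longleftrightarrow> (\<exists>a1 b1 a2 b2 a3 b3. (a1, b1) \<in> E \<and> (a2, b2) \<in> E \<and> (a3, b3) \<in> E \<and>
     a1 < a2 \<and> a2 < a3 \<and> b3 < b2 \<and> b2 < b1)"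
  (is "_ \<longleftrightarrow> ?chain")
proof
  assume "decreasing_chain 3 E"
  then show ?chain
    unfolding decreasing_chain_def by (auto simp: numeral_eq_Suc length_Suc_conv) blast
next
  assume ?chain
  then obtain a1 b1 a2 b2 a3 b3 where "(a1, b1) \<in> E \<and> (a2, b2) \<in> E \<and> (a3, b3) \<in> E \<and>
     a1 < a2 \<and> a2 < a3 \<and> b3 < b2 \<and> b2 < b1" by blast
  then show "decreasing_chain 3 E"
    unfolding decreasing_chain_def by (intro exI[of _ "[(a1, b1), (a2, b2), (a3, b3)]"]) auto
qed

lemma decreasing_chain_4_iff:
  "decreasing_chain 4 E \<longleftrightarrow>
     (\<exists>a1 b1 a2 b2 a3 b3 a4 b4. (a1, b1) \<in> E \<and> (a2, b2) \<in> E \<and> (a3, b3) \<in> E \<and> (a4, b4) \<in> E \<and>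
       a1 < a2 \<and> a2 < a3 \<and> a3 < a4 \<and> b4 < b3 \<and> b3 < b2 \<and> b2 < b1)"
  (is "_ \<longleftrightarrow> ?chain")
proof
  assume "decreasing_chain 4 E"
  then show ?chain
    unfolding decreasing_chain_def by (auto simp: numeral_eq_Suc length_Suc_conv) blast
next
  assume ?chain
  then obtain a1 b1 a2 b2 a3 b3 a4 b4 where "(a1, b1) \<in> E \<and> (a2, b2) \<in> E \<and> (a3, b3) \<in> E \<and>
     (a4, b4) \<in> E \<and> a1 < a2 \<and> a2 < a3 \<and> a3 < a4 \<and> b4 < b3 \<and> b3 < b2 \<and> b2 < b1" by blast
  then show "decreasing_chain 4 E"
    unfolding decreasing_chain_def
    by (intro exI[of _ "[(a1, b1), (a2, b2), (a3, b3), (a4, b4)]"]) auto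
qed

lemma decreasing_chain_image_apfst:
  assumes "strict_mono f"
  shows "decreasing_chain k (apfst f ` E) \<longleftrightarrow> decreasing_chain k E"
proof
  assume "decreasing_chain k (apfst f ` E)"
  then obtain ps where ps: "length ps = k" "set ps \<subseteq> apfst f ` E"
    "sorted_wrt (\<lambda>p q. fst p < fst q \<and> snd q < snd p) ps"
    unfolding decreasing_chain_def by blast
  define qs where "qs = map (inv_into E (apfst f)) ps"
  have "ps = map (apfst f) qs"
    using ps(2) unfolding qs_def map_map by (metis comp_apply f_inv_into_f map_idI subsetD)
  moreover have "set qs \<subseteq> E"
    using ps(2) unfolding qs_def set_map by (blast intro: inv_into_into)
  ultimately show "decreasing_chain k E" using ps
    unfolding decreasing_chain_def using strict_mono_less[OF assms]
    by (intro exI[of _ qs]) (auto simp: sorted_wrt_map)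
next
  assume "decreasing_chain k E"
  then obtain ps where "length ps = k" "set ps \<subseteq> E"
    "sorted_wrt (\<lambda>p q. fst p < fst q \<and> snd q < snd p) ps"
    unfolding decreasing_chain_def by blast
  then show "decreasing_chain k (apfst f ` E)"
    unfolding decreasing_chain_def using strict_mono_less[OF assms]
    by (intro exI[of _ "map (apfst f) ps"]) (auto simp: sorted_wrt_map)
qed

lemma delta_length [simp]: "length (delta k) = k"
  by (simp add: delta_def)

lemma delta_nth: "a < k \<Longrightarrow> delta k ! a = k - a"
  by (simp add: delta_def rev_nth del: upt_Suc)

lemma contains_delta_iff_decreasing_chain:
  "contains_pat w (delta k) \<longleftrightarrow> decreasing_chain k ((\<lambda>i. (i, w ! i)) ` {..<length w})"
proof -
  let ?dec = "\<lambda>is. length is = k \<and> sorted_wrt (\<lambda>i j. i < j \<and> w ! j < w ! i) is \<and>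
    (\<forall>i\<in>set is. i < length w)"
  have iso_iff: "(\<forall>a<k. \<forall>b<k. w ! (is ! a) < w ! (is ! b) \<longleftrightarrow> delta k ! a < delta k ! b) \<longleftrightarrow>
      (\<forall>a b. a < b \<and> b < k \<longrightarrow> w ! (is ! b) < w ! (is ! a))" for "is"
    by (auto simp: delta_nth) (metis diff_less_mono2 less_asym linorder_neqE_nat)
  have "contains_pat w (delta k) \<longleftrightarrow> (\<exists>is. ?dec is)"
    unfolding contains_pat_iff_indices delta_length iso_iff
    by (auto simp: sorted_wrt_iff_nth_less)
  also have "\<dots> \<longleftrightarrow> decreasing_chain k ((\<lambda>i. (i, w ! i)) ` {..<length w})"
  proof
    assume "\<exists>is. ?dec is"
    then obtain "is" where "?dec is" ..
    then show "decreasing_chain k ((\<lambda>i. (i, w ! i)) ` {..<length w})"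
      unfolding decreasing_chain_def
      by (intro exI[of _ "map (\<lambda>i. (i, w ! i)) is"]) (auto simp: sorted_wrt_map)
  next
    assume "decreasing_chain k ((\<lambda>i. (i, w ! i)) ` {..<length w})"
    then obtain ps where ps: "length ps = k" "set ps \<subseteq> (\<lambda>i. (i, w ! i)) ` {..<length w}"
      "sorted_wrt (\<lambda>p q. fst p < fst q \<and> snd q < snd p) ps"
      unfolding decreasing_chain_def by blast
    moreover have "\<exists>is. ps = map (\<lambda>i. (i, w ! i)) is"
      using ps(2) by (auto simp: ex_map_conv)
    then obtain "is" where "ps = map (\<lambda>i. (i, w ! i)) is" ..
    ultimately show "\<exists>is. ?dec is"
      by (intro exI[of _ "is"]) (auto simp: sorted_wrt_map)
  qed
  finally show ?thesis .
qed

lemma contains_delta_one_line_iff: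
  "contains_pat (one_line n p) (delta k) \<longleftrightarrow> decreasing_chain k ((\<lambda>x. (x, p x)) ` {1..n})"
proof -
  have "apfst Suc ` (\<lambda>i. (i, one_line n p ! i)) ` {..<length (one_line n p)} =
      (\<lambda>x. (x, p x)) ` Suc ` {..<n}"
    by (force simp: one_line_def image_image simp del: upt_Suc)
  also have "Suc ` {..<n} = {1..n}"
    by (simp add: image_Suc_lessThan)
  finally have "(\<lambda>x. (x, p x)) ` {1..n} =
      apfst Suc ` (\<lambda>i. (i, one_line n p ! i)) ` {..<length (one_line n p)}" ..
  then show ?thesis
    by (simp add: contains_delta_iff_decreasing_chain decreasing_chain_image_apfst
        strict_mono_Suc_iff)
qed

section \<open>Words avoiding 213 and 4132\<close>

definition avoiders_213_4132 :: "nat \<Rightarrow> nat \<Rightarrow> nat list set" where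
  "avoiders_213_4132 lo m =
     {w. distinct w \<and> set w = {lo..<lo+m} \<and> avoids w [2,1,3] \<and> avoids w [4,1,3,2]}"

lemma avoiders_213_4132_0 [simp]: "avoiders_213_4132 lo 0 = {[]}"
  by (auto simp: avoiders_213_4132_def avoids_def not_contains_pat_Nil)

lemma length_avoiders_213_4132: "w \<in> avoiders_213_4132 lo m \<Longrightarrow> length w = m"
  by (auto simp: avoiders_213_4132_def dest: distinct_card)

lemma set_avoiders_213_4132: "w \<in> avoiders_213_4132 lo m \<Longrightarrow> set w = {lo..<lo+m}"
  by (simp add: avoiders_213_4132_def)

lemma finite_avoiders_213_4132: "finite (avoiders_213_4132 lo m)"
proof (rule finite_subset)
  show "avoiders_213_4132 lo m \<subseteq> {w. set w \<subseteq> {lo..<lo+m} \<and> length w = m}"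
    using length_avoiders_213_4132 set_avoiders_213_4132 by blast
qed (simp add: finite_lists_length_eq)

lemma contains_213_4132_append_increasing_below:
  assumes inc: "sorted_wrt (<) u" and below: "\<forall>x\<in>set a. \<forall>y\<in>set u. y < x"
  shows "contains_pat (a @ u) [2,1,3] \<longleftrightarrow> contains_pat a [2,1,3]"
    and "contains_pat (a @ u) [4,1,3,2] \<longleftrightarrow> contains_pat a [4,1,3,2]"
proof -
  let ?w = "a @ u"
  have in_u: "length a \<le> p"
    if "p < length ?w" "q < length ?w" "length a \<le> q" "?w ! p < ?w ! q" for p q
  proof (rule ccontr)
    assume "\<not> length a \<le> p"
    then have "?w ! q < ?w ! p"
      using that below by (auto simp: nth_append)
    then show False using that(4) by simp
  qed
  have inc_u: "?w ! p < ?w ! q" if "length a \<le> p" "p < q" "q < length ?w" for p q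
    using that inc by (auto simp: nth_append sorted_wrt_iff_nth_less)
  show "contains_pat ?w [2,1,3] \<longleftrightarrow> contains_pat a [2,1,3]"
  proof
    assume "contains_pat ?w [2,1,3]"
    then obtain i j k where o: "i < j" "j < k" "k < length ?w" "?w ! j < ?w ! i" "?w ! i < ?w ! k"
      unfolding contains_pat_213_iff by blast
    have "k < length a"
    proof (rule ccontr)
      assume "\<not> k < length a"
      then have "length a \<le> i" using in_u[of i k] o by simp
      then show False using inc_u[of i j] o by simp
    qed
    with o show "contains_pat a [2,1,3]"
      unfolding contains_pat_213_iff
      by (intro exI[of _ i] exI[of _ j] exI[of _ k]) (simp add: nth_append)
  qed (rule contains_pat_append_left)
  show "contains_pat ?w [4,1,3,2] \<longleftrightarrow> contains_pat a [4,1,3,2]"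
  proof
    assume "contains_pat ?w [4,1,3,2]"
    then obtain i j k l where o: "i < j" "j < k" "k < l" "l < length ?w"
      "?w ! j < ?w ! l" "?w ! l < ?w ! k" "?w ! k < ?w ! i"
      unfolding contains_pat_4132_iff by blast
    have "l < length a"
    proof (rule ccontr)
      assume "\<not> l < length a"
      then have "length a \<le> j" using in_u[of j l] o by simp
      then show False using inc_u[of k l] o by simp
    qed
    with o show "contains_pat a [4,1,3,2]"
      unfolding contains_pat_4132_iff
      by (intro exI[of _ i] exI[of _ j] exI[of _ k] exI[of _ l]) (simp add: nth_append)
  qed (rule contains_pat_append_left)
qed

lemma Cons_in_avoiders_213_4132:
  assumes "b \<in> avoiders_213_4132 (Suc lo) m"
  shows "lo # b \<in> avoiders_213_4132 lo (Suc m)"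
proof -
  have min: "\<forall>y\<in>set b. lo < y" using set_avoiders_213_4132[OF assms] by auto
  then show ?thesis
    using assms contains_pat_Cons_min[OF min, of 1 "[2,1,3]"]
      contains_pat_Cons_min[OF min, of 1 "[4,1,3,2]"]
    by (auto simp: avoiders_213_4132_def avoids_def)
qed

lemma append_upt_in_avoiders_213_4132:
  assumes a: "a \<in> avoiders_213_4132 (lo+j+1) (m-j)" and j: "j < m"
  shows "a @ [lo..<lo+j+1] \<in> avoiders_213_4132 lo (Suc m)"
proof -
  have set_a: "set a = {lo+j+1..<lo+j+1+(m-j)}" using set_avoiders_213_4132[OF a] .
  then have below: "\<forall>x\<in>set a. \<forall>y\<in>set [lo..<lo+j+1]. y < x" by auto
  have "set (a @ [lo..<lo+j+1]) = {lo..<lo+j+1} \<union> {lo+j+1..<lo + Suc m}"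
    using set_a j by (simp add: Un_commute del: upt_Suc)
  also have "\<dots> = {lo..<lo + Suc m}" using j by (intro ivl_disj_un_two) simp_all
  finally have "set (a @ [lo..<lo+j+1]) = {lo..<lo + Suc m}" .
  moreover have "distinct (a @ [lo..<lo+j+1])"
    using a below by (auto simp: avoiders_213_4132_def simp del: upt_Suc)
  moreover have "avoids (a @ [lo..<lo+j+1]) [2,1,3] \<and> avoids (a @ [lo..<lo+j+1]) [4,1,3,2]"
    using a contains_213_4132_append_increasing_below[OF sorted_wrt_upt below]
    unfolding avoids_def avoiders_213_4132_def by blast
  ultimately show ?thesis unfolding avoiders_213_4132_def by blast
qed

lemma avoiders_213_4132_above_block:
  assumes "a \<in> avoiders_213_4132 (lo+j+1) (m-j)" "j < m"
  shows "a \<noteq> []" "\<forall>z\<in>set a. lo + j < z"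
  using set_avoiders_213_4132[OF assms(1)] length_avoiders_213_4132[OF assms(1)] assms(2) by auto

lemma lower_part_of_interval:
  fixes A B :: "nat set"
  assumes "A \<union> B = {lo..<lo+m}" "A \<inter> B = {}" "\<forall>x\<in>A. \<forall>y\<in>B. y < x"
  shows "B = {lo..<lo + card B}"
proof -
  have fin: "finite B" using assms(1) by (metis finite_Un finite_atLeastLessThan)
  have "B \<subseteq> {lo..<lo + card B}"
  proof
    fix y assume y: "y \<in> B"
    then have y_range: "lo \<le> y" "y < lo + m" using assms(1) by auto
    have "{lo..y} \<subseteq> B"
    proof
      fix z assume z: "z \<in> {lo..y}"
      then have "z \<in> A \<union> B" using y_range assms(1) by auto
      moreover have "z \<notin> A" using y z assms(3) by force
      ultimately show "z \<in> B" by blast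
    qed
    then have "card {lo..y} \<le> card B" using fin by (rule card_mono[rotated])
    then show "y \<in> {lo..<lo + card B}" using y_range by simp
  qed
  then show ?thesis using fin by (intro card_subset_eq) auto
qed

lemma avoids_213_split_at_min:
  assumes "avoids (a @ x # b) [2,1,3]" "y \<in> set a" "z \<in> set b" "x < y"
  shows "z \<le> y"
proof (rule ccontr)
  assume "\<not> z \<le> y"
  obtain i k where "i < length a" "a ! i = y" "k < length b" "b ! k = z"
    using assms(2,3) by (auto simp: in_set_conv_nth)
  with \<open>\<not> z \<le> y\<close> assms(4) have "contains_pat (a @ x # b) [2,1,3]"
    unfolding contains_pat_213_iff
    by (intro exI[of _ i] exI[of _ "length a"] exI[of _ "Suc (length a + k)"])
      (simp add: nth_append)
  then show False using assms(1) by (simp add: avoids_def)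
qed

lemma avoids_4132_split_at_min:
  assumes "avoids (a @ x # b) [4,1,3,2]" "y \<in> set a" "\<forall>z\<in>set b. x < z \<and> z < y"
  shows "sorted b"
  unfolding sorted_iff_nth_mono_less
proof (intro allI impI)
  fix p q assume pq: "p < q" "q < length b"
  show "b ! p \<le> b ! q"
  proof (rule ccontr)
    assume "\<not> b ! p \<le> b ! q"
    obtain i where "i < length a" "a ! i = y" using assms(2) by (auto simp: in_set_conv_nth)
    with pq assms(3) \<open>\<not> b ! p \<le> b ! q\<close> have "contains_pat (a @ x # b) [4,1,3,2]"
      unfolding contains_pat_4132_iff
      by (intro exI[of _ i] exI[of _ "length a"] exI[of _ "Suc (length a + p)"]
          exI[of _ "Suc (length a + q)"]) (simp add: nth_append)
    then show False using assms(1) by (simp add: avoids_def)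
  qed
qed

lemma avoids_213_4132_split_at_min:
  assumes av: "avoids (a @ lo # b) [2,1,3]" "avoids (a @ lo # b) [4,1,3,2]"
    and dist: "distinct (a @ lo # b)" and set_ab: "set a \<union> set b = {Suc lo..<Suc lo + m}"
    and "a \<noteq> []"
  shows "b = [Suc lo..<Suc lo + length b]"
proof -
  have lo_min: "\<forall>y\<in>set a \<union> set b. lo < y" using set_ab by auto
  have dab: "set a \<inter> set b = {}" "distinct b" using dist by auto
  have below: "\<forall>y\<in>set a. \<forall>z\<in>set b. z < y"
  proof (intro ballI)
    fix y z assume yz: "y \<in> set a" "z \<in> set b"
    have "z \<le> y" using avoids_213_split_at_min[OF av(1) yz] lo_min yz(1) by blast
    moreover have "z \<noteq> y" using yz dab(1) by blast
    ultimately show "z < y" by simp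
  qed
  then have "sorted b"
    using avoids_4132_split_at_min[of a lo b "hd a"] av(2) lo_min \<open>a \<noteq> []\<close> by simp
  moreover have "set b = {Suc lo..<Suc lo + length b}"
    using lower_part_of_interval[OF set_ab dab(1) below] distinct_card[OF dab(2)] by simp
  ultimately show ?thesis
    by (intro sorted_distinct_set_unique[OF _ dab(2) sorted_upt distinct_upt])
      (simp_all del: upt_Suc)
qed

lemma avoiders_213_4132_SucE:
  assumes w: "w \<in> avoiders_213_4132 lo (Suc m)"
  obtains (Cons) b where "w = lo # b" "b \<in> avoiders_213_4132 (Suc lo) m"
  | (append) j a where "j < m" "w = a @ [lo..<lo+j+1]" "a \<in> avoiders_213_4132 (lo+j+1) (m-j)"
proof -
  have dw: "distinct w" and sw: "set w = {lo..<lo + Suc m}"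
    and av: "avoids w [2,1,3]" "avoids w [4,1,3,2]"
    using w by (auto simp: avoiders_213_4132_def)
  obtain a b where wab: "w = a @ lo # b" using sw split_list[of lo w] by auto
  have dab: "distinct a" "distinct b" "set a \<inter> set b = {}" "lo \<notin> set a" "lo \<notin> set b"
    using dw wab by auto
  have "set a \<union> set b = set w - {lo}" using dab(4,5) wab by auto
  also have "\<dots> = {Suc lo..<Suc lo + m}" unfolding sw by auto
  finally have sab: "set a \<union> set b = {Suc lo..<Suc lo + m}" .
  show thesis
  proof (cases "a = []")
    case True
    have "\<forall>y\<in>set b. lo < y" using sab True by auto
    then have "b \<in> avoiders_213_4132 (Suc lo) m"
      using av dab sab contains_pat_Cons_min[of b lo 1] True wab
      unfolding avoiders_213_4132_def avoids_def by auto
    with True wab show thesis by (intro Cons) simp_all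
  next
    case False
    define j where "j = length b"
    have "b = [Suc lo..<Suc lo + j]"
      using avoids_213_4132_split_at_min[OF av[unfolded wab] dw[unfolded wab] sab False]
      by (simp add: j_def)
    then have w_eq: "w = a @ [lo..<lo+j+1]" using wab by (simp add: upt_conv_Cons del: upt_Suc)
    have "length w = Suc m" using dw sw by (simp add: distinct_card[symmetric])
    then have "j < m" using False unfolding wab j_def by (cases a) auto
    have "set b = {Suc lo..<Suc lo + j}" using \<open>b = [Suc lo..<Suc lo + j]\<close> by (simp del: upt_Suc)
    then have "set a = {Suc lo..<Suc lo + m} - {Suc lo..<Suc lo + j}"
      using sab dab(3) by blast
    also have "\<dots> = {lo+j+1..<lo+j+1+(m-j)}" using \<open>j < m\<close> by (simp add: ivl_diff)
    finally have "set a = {lo+j+1..<lo+j+1+(m-j)}" .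
    moreover have "avoids a [2,1,3] \<and> avoids a [4,1,3,2]"
      using av contains_pat_append_left unfolding w_eq avoids_def by blast
    ultimately have "a \<in> avoiders_213_4132 (lo+j+1) (m-j)"
      using dab(1) by (simp add: avoiders_213_4132_def)
    with \<open>j < m\<close> w_eq show thesis by (rule append)
  qed
qed

lemma avoiders_213_4132_Suc:
  "avoiders_213_4132 lo (Suc m) =
     Cons lo ` avoiders_213_4132 (Suc lo) m \<union>
     (\<Union>j<m. (\<lambda>a. a @ [lo..<lo+j+1]) ` avoiders_213_4132 (lo+j+1) (m-j))"
    (is "_ = ?A \<union> ?B")
proof (intro equalityI subsetI)
  fix w assume "w \<in> avoiders_213_4132 lo (Suc m)"
  then show "w \<in> ?A \<union> ?B"
  proof (cases rule: avoiders_213_4132_SucE)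
    case (Cons b)
    then show ?thesis by (intro UnI1 image_eqI)
  next
    case (append j a)
    then show ?thesis by (intro UnI2 UN_I[of j] image_eqI) simp_all
  qed
next
  fix w assume "w \<in> ?A \<union> ?B"
  then consider (Cons) b where "b \<in> avoiders_213_4132 (Suc lo) m" "w = lo # b"
    | (append) j a where "j < m" "a \<in> avoiders_213_4132 (lo+j+1) (m-j)" "w = a @ [lo..<lo+j+1]"
    by blast
  then show "w \<in> avoiders_213_4132 lo (Suc m)"
  proof cases
    case Cons
    then show ?thesis using Cons_in_avoiders_213_4132 by simp
  next
    case append
    then show ?thesis using append_upt_in_avoiders_213_4132 by simp
  qed
qed

lemma card_avoiders_213_4132_Suc_rec:
  "card (avoiders_213_4132 lo (Suc m)) =
     card (avoiders_213_4132 (Suc lo) m) + (\<Sum>j<m. card (avoiders_213_4132 (lo+j+1) (m-j)))"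
proof -
  let ?A = "Cons lo ` avoiders_213_4132 (Suc lo) m"
  let ?B = "\<lambda>j. (\<lambda>a. a @ [lo..<lo+j+1]) ` avoiders_213_4132 (lo+j+1) (m-j)"
  have card_B: "card (?B j) = card (avoiders_213_4132 (lo+j+1) (m-j))" for j
    by (rule card_image) (simp add: inj_on_def)
  have last_B: "last w = lo + j" if "w \<in> ?B j" for w j
    using that by (auto simp del: upt_Suc)
  have disjoint_B: "?B i \<inter> ?B j = {}" if "i \<noteq> j" for i j
    using last_B that unfolding disjoint_iff by (metis add_left_cancel)
  have hd_B: "hd w \<noteq> lo" if w: "w \<in> ?B j" and j: "j < m" for w j
  proof -
    obtain a where a: "a \<in> avoiders_213_4132 (lo+j+1) (m-j)" "w = a @ [lo..<lo+j+1]"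
      using w by blast
    then show ?thesis
      using avoiders_213_4132_above_block[OF a(1) j] hd_in_set[of a] by auto
  qed
  have disjoint_AB: "?A \<inter> (\<Union>j<m. ?B j) = {}"
  proof (rule ccontr)
    assume "?A \<inter> (\<Union>j<m. ?B j) \<noteq> {}"
    then obtain w j where w: "w \<in> ?A" "j < m" "w \<in> ?B j" by blast
    from w(1) have "hd w = lo" by auto
    with hd_B[OF w(3,2)] show False by simp
  qed
  have "card (avoiders_213_4132 lo (Suc m)) = card ?A + card (\<Union>j<m. ?B j)"
    unfolding avoiders_213_4132_Suc
    using disjoint_AB by (intro card_Un_disjoint) (simp_all add: finite_avoiders_213_4132)
  also have "card ?A = card (avoiders_213_4132 (Suc lo) m)"
    by (rule card_image) simp
  also have "card (\<Union>j<m. ?B j) = (\<Sum>j<m. card (?B j))"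
  proof (rule card_UN_disjoint)
    show "\<forall>i\<in>{..<m}. \<forall>j\<in>{..<m}. i \<noteq> j \<longrightarrow> ?B i \<inter> ?B j = {}"
      using disjoint_B by blast
  qed (simp_all add: finite_avoiders_213_4132)
  finally show ?thesis by (simp only: card_B)
qed

lemma sum_fib_odd: "(\<Sum>i<n. fib (2 * i + 1)) = fib (2 * n)"
  by (induction n) (simp_all add: numeral_eq_Suc)

lemma card_avoiders_213_4132: "card (avoiders_213_4132 lo (Suc m)) = fib (2 * m + 1)"
proof (induction m arbitrary: lo rule: less_induct)
  case (less m)
  show ?case
  proof (cases m)
    case 0
    then show ?thesis by (simp add: card_avoiders_213_4132_Suc_rec)
  next
    case (Suc k)
    have "(\<Sum>j<m. card (avoiders_213_4132 (lo+j+1) (m-j))) = (\<Sum>j<Suc k. fib (2 * (k - j) + 1))"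
      using less Suc by (intro sum.cong) (simp_all add: Suc_diff_le)
    also have "\<dots> = (\<Sum>j<Suc k. fib (2 * j + 1))"
      using sum.nat_diff_reindex[of "\<lambda>i. fib (2 * i + 1)" "Suc k"] by (simp only: diff_Suc_Suc)
    also have "\<dots> = fib (2 * Suc k)"
      by (rule sum_fib_odd)
    finally show ?thesis
      using less[of k "Suc lo"] Suc by (simp add: card_avoiders_213_4132_Suc_rec)
  qed
qed

(* The guard m = 0 keeps the word [lo] from being produced twice. *)
fun min_at_ends :: "nat \<Rightarrow> nat \<Rightarrow> nat list set" where
  "min_at_ends lo 0 = {[]}"
| "min_at_ends lo (Suc m) =
     Cons lo ` min_at_ends (Suc lo) m \<union>
     (if m = 0 then {} else (\<lambda>a. a @ [lo]) ` min_at_ends (Suc lo) m)"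

lemma min_at_ends_subset_avoiders: "min_at_ends lo m \<subseteq> avoiders_213_4132 lo m"
proof (induction m arbitrary: lo)
  case (Suc m)
  have "Cons lo ` min_at_ends (Suc lo) m \<subseteq> avoiders_213_4132 lo (Suc m)"
    using Suc Cons_in_avoiders_213_4132 by blast
  moreover have "a @ [lo] \<in> avoiders_213_4132 lo (Suc m)"
    if "a \<in> min_at_ends (Suc lo) m" "m \<noteq> 0" for a
    using append_upt_in_avoiders_213_4132[of a lo 0 m] Suc that by auto
  ultimately show ?case by auto
qed simp

lemma finite_min_at_ends: "finite (min_at_ends lo m)"
  using min_at_ends_subset_avoiders finite_avoiders_213_4132 by (rule finite_subset)

lemma card_min_at_ends: "card (min_at_ends lo (Suc m)) = 2 ^ m"
proof (induction m arbitrary: lo)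
  case (Suc m)
  let ?A = "Cons lo ` min_at_ends (Suc lo) (Suc m)"
  let ?B = "(\<lambda>a. a @ [lo]) ` min_at_ends (Suc lo) (Suc m)"
  have hd_B: "hd w \<noteq> lo" if w: "w \<in> ?B" for w
  proof -
    obtain a where a: "a \<in> min_at_ends (Suc lo) (Suc m)" "w = a @ [lo]" using w by blast
    then have "a \<in> avoiders_213_4132 (Suc lo) (Suc m)"
      using min_at_ends_subset_avoiders by blast
    then show ?thesis
      using a(2) avoiders_213_4132_above_block[of a lo 0 "Suc m"] hd_in_set[of a] by auto
  qed
  have "?A \<inter> ?B = {}"
  proof (rule ccontr)
    assume "?A \<inter> ?B \<noteq> {}"
    then obtain w where w: "w \<in> ?A" "w \<in> ?B" by blast
    from w(1) have "hd w = lo" by (auto simp del: min_at_ends.simps)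
    with hd_B[OF w(2)] show False by simp
  qed
  moreover have "min_at_ends lo (Suc (Suc m)) = ?A \<union> ?B" by simp
  ultimately have "card (min_at_ends lo (Suc (Suc m))) = card ?A + card ?B"
    by (simp add: card_Un_disjoint finite_min_at_ends del: min_at_ends.simps)
  also have "card ?A = 2 ^ m" using Suc by (simp add: card_image)
  also have "card ?B = 2 ^ m" using Suc by (simp add: card_image inj_on_def)
  finally show ?case by simp
qed simp

section \<open>Decreasing chains of edges along a path\<close>

definition path_edges :: "nat \<Rightarrow> nat list \<Rightarrow> nat \<Rightarrow> (nat \<times> nat) set" where
  "path_edges s w t = set (zip (s # w) (w @ [t]))"

lemma path_edges_Nil [simp]: "path_edges s [] t = {(s, t)}"
  by (simp add: path_edges_def)

lemma path_edges_Cons: "path_edges s (x # w) t = insert (s, x) (path_edges x w t)"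
  by (simp add: path_edges_def)

lemma path_edges_append:
  "c \<noteq> [] \<Longrightarrow> path_edges s (a @ c) t = path_edges s a (hd c) \<union> path_edges (hd c) (tl c) t"
  by (induction a arbitrary: s) (auto simp: path_edges_Cons neq_Nil_conv)

lemma path_edges_upt:
  "path_edges x [Suc x..<x+j+1] t = {(y, Suc y) | y. x \<le> y \<and> y < x + j} \<union> {(x + j, t)}"
proof (induction j arbitrary: x)
  case (Suc j)
  have "[Suc x..<x + Suc j + 1] = Suc x # [Suc (Suc x)..<Suc x + j + 1]"
    by (simp add: upt_conv_Cons del: upt_Suc)
  then show ?case using Suc.IH[of "Suc x"] by (auto simp: path_edges_Cons simp del: upt_Suc)
qed auto

lemma path_edges_append_upt:
  "a \<noteq> [] \<Longrightarrow> path_edges s (a @ [x..<x+j+1]) t =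
     path_edges s a x \<union> {(y, Suc y) | y. x \<le> y \<and> y < x + j} \<union> {(x + j, t)}"
  using path_edges_append[of "[x..<x+j+1]" s a t] path_edges_upt[of x j t]
  by (simp add: upt_conv_Cons del: upt_Suc)

lemma path_edges_mem:
  "(x, y) \<in> path_edges s w t \<Longrightarrow> (x = s \<or> x \<in> set w) \<and> (y = t \<or> y \<in> set w)"
  unfolding path_edges_def by (auto dest: set_zip_leftD set_zip_rightD)

lemma path_edges_start:
  assumes "(s, y) \<in> path_edges s w t" "s \<notin> set w" "w \<noteq> []"
  shows "y = hd w"
  using assms path_edges_mem[of s y] by (cases w) (auto simp: path_edges_Cons)

lemma path_edges_append_upt_cases:
  assumes "(x, y) \<in> path_edges s (a @ [lo..<lo+j+1]) t"
    and "a \<noteq> []" "\<forall>z\<in>set a. lo + j < z" "s < lo"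
  shows "(x = s \<and> lo + j < y) \<or> (lo + j < x \<and> (y = lo \<or> lo + j < y)) \<or>
      (lo \<le> x \<and> x < lo + j \<and> y = Suc x) \<or> (x = lo + j \<and> y = t)"
    and "(x, y) \<notin> path_edges s a lo \<Longrightarrow> lo \<le> x \<and> x \<le> lo + j"
proof -
  have "(x = s \<and> lo + j < y) \<or> (lo + j < x \<and> (y = lo \<or> lo + j < y))"
    if a_edge: "(x, y) \<in> path_edges s a lo"
  proof -
    have "s \<notin> set a" using assms(3,4) by auto
    then have "x = s \<Longrightarrow> y = hd a"
      using a_edge path_edges_start[of s y a lo] assms(2) by simp
    then show ?thesis
      using path_edges_mem[OF a_edge] assms(2-4) hd_in_set[of a] by auto
  qed
  moreover have "(lo \<le> x \<and> x < lo + j \<and> y = Suc x) \<or> (x = lo + j \<and> y = t)"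
    if "(x, y) \<notin> path_edges s a lo"
    using that assms(1) path_edges_append_upt[OF assms(2)] by auto
  ultimately show "(x = s \<and> lo + j < y) \<or> (lo + j < x \<and> (y = lo \<or> lo + j < y)) \<or>
      (lo \<le> x \<and> x < lo + j \<and> y = Suc x) \<or> (x = lo + j \<and> y = t)"
    and "(x, y) \<notin> path_edges s a lo \<Longrightarrow> lo \<le> x \<and> x \<le> lo + j"
    by auto
qed

(* The edge (s, lo) could only start a chain, and then all later targets would lie below lo,
   i.e. would all equal t. *)
lemma decreasing_chain_path_edges_Cons:
  assumes chain: "decreasing_chain k (path_edges s (lo # b) t)" and k: "3 \<le> k"
    and lo: "s < lo" "t < lo" "\<forall>y\<in>set b. lo < y"
  shows "decreasing_chain k (path_edges lo b t)"
proof -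
  let ?E = "path_edges lo b t"
  obtain ps where ps: "length ps = k" "set ps \<subseteq> insert (s, lo) ?E"
    and sorted: "sorted_wrt (\<lambda>p q. fst p < fst q \<and> snd q < snd p) ps"
    using chain unfolding decreasing_chain_def path_edges_Cons by blast
  have E_shape: "s < fst e \<and> (snd e < lo \<longrightarrow> snd e = t)" if "e \<in> ?E" for e
    using path_edges_mem[of "fst e" "snd e" lo b t] that lo by auto
  have ps_nth: "ps ! i \<in> insert (s, lo) ?E" if "i < k" for i
    using ps(1,2) that nth_mem[of i ps] by blast
  have ps_less: "fst (ps ! i) < fst (ps ! j) \<and> snd (ps ! j) < snd (ps ! i)"
    if "i < j" "j < k" for i j
    using sorted ps(1) that by (simp add: sorted_wrt_iff_nth_less)
  have "(s, lo) \<notin> set ps"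
  proof
    assume "(s, lo) \<in> set ps"
    then obtain i where i: "i < k" "ps ! i = (s, lo)" using ps(1) by (auto simp: in_set_conv_nth)
    have "i = 0"
    proof (rule ccontr)
      assume "i \<noteq> 0"
      then have "fst (ps ! 0) < s" using ps_less[of 0 i] i by simp
      then show False using ps_nth[of 0] i E_shape by fastforce
    qed
    then have "ps ! 1 \<in> ?E" "ps ! 2 \<in> ?E"
      using ps_nth[of 1] ps_nth[of 2] ps_less[of 0 1] ps_less[of 0 2] i k by auto
    moreover have "snd (ps ! 2) < snd (ps ! 1)" "snd (ps ! 1) < lo"
      using ps_less[of 1 2] ps_less[of 0 1] i k \<open>i = 0\<close> by auto
    ultimately show False using E_shape[of "ps ! 1"] E_shape[of "ps ! 2"] by simp
  qed
  then have "set ps \<subseteq> ?E" using ps(2) by blast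
  with ps(1) sorted show ?thesis unfolding decreasing_chain_def by blast
qed

lemma no_decreasing_chain_4_path_edges_append_upt:
  assumes no_chain: "\<not> decreasing_chain 4 (path_edges s a lo)"
    and a: "a \<noteq> []" "\<forall>z\<in>set a. lo + j < z" and st: "s < lo" "t < lo"
  shows "\<not> decreasing_chain 4 (path_edges s (a @ [lo..<lo+j+1]) t)"
proof
  let ?w = "a @ [lo..<lo+j+1]"
  note shape = path_edges_append_upt_cases(1)[OF _ a st(1)]
  assume "decreasing_chain 4 (path_edges s ?w t)"
  then obtain a1 b1 a2 b2 a3 b3 a4 b4 where
    P: "(a1, b1) \<in> path_edges s ?w t" "(a2, b2) \<in> path_edges s ?w t"
       "(a3, b3) \<in> path_edges s ?w t" "(a4, b4) \<in> path_edges s ?w t"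
    and o: "a1 < a2" "a2 < a3" "a3 < a4" "b4 < b3" "b3 < b2" "b2 < b1"
    unfolding decreasing_chain_4_iff by blast
  have "\<not> ((a1, b1) \<in> path_edges s a lo \<and> (a2, b2) \<in> path_edges s a lo \<and>
      (a3, b3) \<in> path_edges s a lo \<and> (a4, b4) \<in> path_edges s a lo)"
    using no_chain o unfolding decreasing_chain_4_iff by blast
  then have "lo \<le> a1 \<and> a1 \<le> lo + j \<or> lo \<le> a2 \<and> a2 \<le> lo + j \<or>
      lo \<le> a3 \<and> a3 \<le> lo + j \<or> lo \<le> a4 \<and> a4 \<le> lo + j"
    using path_edges_append_upt_cases(2)[OF _ a st(1)] P by blast
  (* Only (s, hd a) starts left of the block; the block edges (y, y + 1) rise, and nothing
     ends below the target t of (lo + j, t): a chain meeting the block has at most three edges. *)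
  then show False
    using shape[OF P(1)] shape[OF P(2)] shape[OF P(3)] shape[OF P(4)] o st by linarith
qed

lemma no_decreasing_chain_3_path_edges_snoc:
  assumes no_chain: "\<not> decreasing_chain 3 (path_edges s a lo)"
    and a: "a \<noteq> []" "\<forall>z\<in>set a. lo < z" and st: "s < lo" "t < lo"
  shows "\<not> decreasing_chain 3 (path_edges s (a @ [lo]) t)"
proof
  have a': "\<forall>z\<in>set a. lo + 0 < z" using a(2) by simp
  have w: "a @ [lo] = a @ [lo..<lo+0+1]" by simp
  note shape = path_edges_append_upt_cases(1)[OF _ a(1) a' st(1), folded w]
  assume "decreasing_chain 3 (path_edges s (a @ [lo]) t)"
  then obtain a1 b1 a2 b2 a3 b3 where
    P: "(a1, b1) \<in> path_edges s (a @ [lo]) t" "(a2, b2) \<in> path_edges s (a @ [lo]) t"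
       "(a3, b3) \<in> path_edges s (a @ [lo]) t"
    and o: "a1 < a2" "a2 < a3" "b3 < b2" "b2 < b1"
    unfolding decreasing_chain_3_iff by blast
  have "\<not> ((a1, b1) \<in> path_edges s a lo \<and> (a2, b2) \<in> path_edges s a lo \<and>
      (a3, b3) \<in> path_edges s a lo)"
    using no_chain o unfolding decreasing_chain_3_iff by blast
  then have "a1 = lo \<or> a2 = lo \<or> a3 = lo"
    using path_edges_append_upt_cases(2)[OF _ a(1) a' st(1), folded w] P by fastforce
  (* Only (s, hd a) starts left of (lo, t), and nothing ends below t. *)
  then show False
    using shape[OF P(1)] shape[OF P(2)] shape[OF P(3)] o st by linarith
qed

lemma decreasing_chain_3_path_edges_append_upt:
  assumes "0 < j" "a \<noteq> []" "\<forall>z\<in>set a. lo + j < z" "s < lo" "t < lo"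
  shows "decreasing_chain 3 (path_edges s (a @ [lo..<lo+j+1]) t)"
proof -
  let ?E = "path_edges s (a @ [lo..<lo+j+1]) t"
  have "(s, hd a) \<in> ?E"
    using path_edges_append_upt[OF assms(2)] assms(2) by (cases a) (auto simp: path_edges_Cons)
  moreover have "(lo, Suc lo) \<in> ?E" "(lo + j, t) \<in> ?E"
    using path_edges_append_upt[OF assms(2)] assms(1) by auto
  moreover have "lo + j < hd a" using assms(2,3) by simp
  ultimately show ?thesis
    unfolding decreasing_chain_3_iff using assms(1,4,5)
    by (intro exI[of _ s] exI[of _ "hd a"] exI[of _ lo] exI[of _ "Suc lo"] exI[of _ "lo + j"]
        exI[of _ t]) simp
qed

lemma no_decreasing_chain_4_avoiders:
  assumes "w \<in> avoiders_213_4132 lo m" "s < lo" "t < lo"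
  shows "\<not> decreasing_chain 4 (path_edges s w t)"
  using assms
proof (induction m arbitrary: lo s t w rule: less_induct)
  case (less m)
  show ?case
  proof (cases m)
    case 0
    with less.prems(1) show ?thesis by (auto simp: decreasing_chain_4_iff)
  next
    case (Suc k)
    from less.prems(1)[unfolded Suc] show ?thesis
    proof (cases rule: avoiders_213_4132_SucE)
      case (Cons b)
      have "\<not> decreasing_chain 4 (path_edges lo b t)"
        using less.IH[of k b "Suc lo" lo t] Cons less.prems(3) Suc by simp
      then show ?thesis
        using decreasing_chain_path_edges_Cons[of 4 s lo b t] Cons(1) less.prems(2,3)
          set_avoiders_213_4132[OF Cons(2)] by auto
    next
      case (append j a)
      have "\<not> decreasing_chain 4 (path_edges s a lo)"
        using less.IH[of "k - j" a "lo + j + 1" s lo] append less.prems(2) Suc by simp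
      then show ?thesis
        using no_decreasing_chain_4_path_edges_append_upt
          avoiders_213_4132_above_block[OF append(3,1)]
          append(2) less.prems(2,3) by blast
    qed
  qed
qed

lemma no_decreasing_chain_3_min_at_ends:
  assumes "w \<in> min_at_ends lo m" "s < lo" "t < lo"
  shows "\<not> decreasing_chain 3 (path_edges s w t)"
  using assms
proof (induction m arbitrary: lo s t w)
  case 0
  then show ?case by (auto simp: decreasing_chain_3_iff)
next
  case (Suc k)
  from Suc.prems(1) consider (Cons) b where "w = lo # b" "b \<in> min_at_ends (Suc lo) k"
    | (snoc) a where "k \<noteq> 0" "w = a @ [lo]" "a \<in> min_at_ends (Suc lo) k"
    by (auto split: if_splits)
  then show ?case
  proof cases
    case Cons
    have "\<forall>y\<in>set b. lo < y"
      using Cons(2) min_at_ends_subset_avoiders set_avoiders_213_4132 by fastforce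
    then show ?thesis
      using Suc.IH[of b "Suc lo" lo t] decreasing_chain_path_edges_Cons[of 3 s lo b t]
        Cons Suc.prems(2,3)
      by auto
  next
    case snoc
    have "a \<in> avoiders_213_4132 (Suc lo) k"
      using snoc(3) min_at_ends_subset_avoiders by blast
    then have "a \<noteq> []" "\<forall>z\<in>set a. lo < z"
      using avoiders_213_4132_above_block[of a lo 0 k] snoc(1) by auto
    then show ?thesis
      using no_decreasing_chain_3_path_edges_snoc Suc.IH[of a "Suc lo" s lo] snoc Suc.prems(2,3)
      by simp
  qed
qed

lemma decreasing_chain_3_if_not_min_at_ends:
  assumes "w \<in> avoiders_213_4132 lo m" "w \<notin> min_at_ends lo m" "s < lo" "t < lo"
  shows "decreasing_chain 3 (path_edges s w t)"
  using assms
proof (induction m arbitrary: w lo s t rule: less_induct)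
  case (less m)
  show ?case
  proof (cases m)
    case 0
    with less.prems(1,2) show ?thesis by simp
  next
    case (Suc k)
    from less.prems(1)[unfolded Suc] show ?thesis
    proof (cases rule: avoiders_213_4132_SucE)
      case (Cons b)
      have "b \<notin> min_at_ends (Suc lo) k"
      proof
        assume "b \<in> min_at_ends (Suc lo) k"
        then have "w \<in> min_at_ends lo m" using Cons(1) Suc by simp
        then show False using less.prems(2) by contradiction
      qed
      then have "decreasing_chain 3 (path_edges lo b t)"
        using less.IH[of k b "Suc lo" lo t] Cons(2) less.prems(4) Suc by simp
      then show ?thesis
        using Cons(1) by (auto simp: path_edges_Cons intro: decreasing_chain_mono)
    next
      case (append j a)
      note a = avoiders_213_4132_above_block[OF append(3,1)]
      show ?thesis
      proof (cases "j = 0")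
        case True
        have "a \<notin> min_at_ends (Suc lo) k"
        proof
          assume "a \<in> min_at_ends (Suc lo) k"
          then have "w \<in> min_at_ends lo m" using append(1,2) Suc True by simp
          then show False using less.prems(2) by contradiction
        qed
        then have "decreasing_chain 3 (path_edges s a lo)"
          using less.IH[of "k - j" a "lo + j + 1" s lo] append(1,3) less.prems(3) Suc True by simp
        then show ?thesis
          unfolding append(2) path_edges_append_upt[OF a(1)]
          by (rule decreasing_chain_mono[OF _ order_refl]) blast
      next
        case False
        then show ?thesis
          using decreasing_chain_3_path_edges_append_upt a append(2) less.prems(3,4) by simp
      qed
    qed
  qed
qed

lemma avoiders_without_decreasing_chain_3:
  assumes "s < lo" "t < lo"
  shows "{w \<in> avoiders_213_4132 lo m. \<not> decreasing_chain 3 (path_edges s w t)} = min_at_ends lo m"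
  using assms min_at_ends_subset_avoiders no_decreasing_chain_3_min_at_ends
    decreasing_chain_3_if_not_min_at_ends
  by fastforce

lemma avoiders_without_decreasing_chain_ge_4:
  assumes "4 \<le> k" "s < lo" "t < lo"
  shows "{w \<in> avoiders_213_4132 lo m. \<not> decreasing_chain k (path_edges s w t)} =
    avoiders_213_4132 lo m"
  using assms no_decreasing_chain_4_avoiders decreasing_chain_mono[OF _ assms(1) order_refl]
  by fastforce

section \<open>Cyclic permutations and their cycle forms\<close>

lemma support_cyclic_perm:
  assumes cyc: "cyclic_perm n p" and n: "1 \<le> n"
  shows "set (support p 1) = {1..n}" and "cycle_form n p = support p 1"
proof -
  have perm: "p permutes {1..n}" using cyc by (simp add: cyclic_perm_def)
  then have "permutation p" using permutation_permutes by blast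
  have "range (\<lambda>i. (p ^^ i) 1) = {1..n}"
  proof
    show "range (\<lambda>i. (p ^^ i) 1) \<subseteq> {1..n}"
      using permutes_in_image[OF permutes_funpow[OF perm]] n by auto
    show "{1..n} \<subseteq> range (\<lambda>i. (p ^^ i) 1)"
      using cyc by (auto simp: cyclic_perm_def)
  qed
  then show set_support: "set (support p 1) = {1..n}"
    using support_set[OF \<open>permutation p\<close>, of 1] by simp
  then have "least_power p 1 = n"
    using distinct_card[OF cycle_of_permutation[OF \<open>permutation p\<close>, of 1]] by simp
  then show "cycle_form n p = support p 1" by (simp add: cycle_form_def)
qed

lemma cycle_form_cyclic_perm:
  assumes "cyclic_perm n p" "1 \<le> n"
  shows "distinct (cycle_form n p)" "set (cycle_form n p) = {1..n}" "cycle_form n p ! 0 = 1"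
    and "cycle_of_list (cycle_form n p) = p"
proof -
  have perm: "p permutes {1..n}" using assms(1) by (simp add: cyclic_perm_def)
  then have "permutation p" using permutation_permutes by blast
  show "distinct (cycle_form n p)"
    using cycle_of_permutation[OF \<open>permutation p\<close>] support_cyclic_perm[OF assms] by simp
  show set_c: "set (cycle_form n p) = {1..n}"
    using support_cyclic_perm[OF assms] by simp
  show "cycle_form n p ! 0 = 1" using assms(2) by (simp add: cycle_form_def)
  show "cycle_of_list (cycle_form n p) = p"
  proof
    fix x
    show "cycle_of_list (cycle_form n p) x = p x"
    proof (cases "x \<in> {1..n}")
      case True
      then show ?thesis
        using cycle_restrict[OF \<open>permutation p\<close>, of x 1] support_cyclic_perm[OF assms] by simp
    next
      case False
      then show ?thesis using id_outside_supp[of x] permutes_not_in[OF perm] set_c by simp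
    qed
  qed
qed

lemma cyclic_perm_cycle_of_list:
  assumes "distinct (1 # w)" "set (1 # w) = {1..n}"
  shows "cyclic_perm n (cycle_of_list (1 # w))" "cycle_form n (cycle_of_list (1 # w)) = 1 # w"
proof -
  let ?c = "1 # w" let ?p = "cycle_of_list ?c"
  have len: "length ?c = n" using distinct_card[OF assms(1)] assms(2) by simp
  have orbit: "(?p ^^ i) 1 = ?c ! (i mod n)" for i
  proof -
    have "(?p ^^ i) 1 = map (?p ^^ i) ?c ! 0" by simp
    also have "\<dots> = ?c ! (i mod n)"
      using cyclic_rotation[OF assms(1), of i] nth_rotate[of 0 ?c i] len by simp
    finally show ?thesis .
  qed
  show "cycle_form n ?p = ?c"
    using orbit len by (intro nth_equalityI) (simp_all add: cycle_form_def)
  have "{1..n} \<subseteq> {(?p ^^ i) 1 | i. True}"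
  proof
    fix x assume "x \<in> {1..n}"
    then obtain i where "i < n" "?c ! i = x" using assms(2) len in_set_conv_nth[of x ?c] by auto
    then show "x \<in> {(?p ^^ i) 1 | i. True}" using orbit[of i] by (auto intro!: exI[of _ i])
  qed
  then show "cyclic_perm n ?p"
    using cycle_permutes[of ?c] assms(2) by (simp add: cyclic_perm_def)
qed

lemma cycle_form_Cons_tl:
  assumes "cyclic_perm n p" "1 \<le> n"
  shows "cycle_form n p = 1 # tl (cycle_form n p)"
proof -
  have "cycle_form n p \<noteq> []" using assms(2) by (simp add: cycle_form_def)
  then show ?thesis using cycle_form_cyclic_perm(3)[OF assms] by (metis hd_Cons_tl hd_conv_nth)
qed

lemma card_cyclic_perms:
  assumes n: "1 \<le> n"
  shows "card {p. cyclic_perm n p \<and> P (cycle_form n p)} =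
    card {w. distinct (1 # w) \<and> set (1 # w) = {1..n} \<and> P (1 # w)}"
proof (rule bij_betw_same_card[of "\<lambda>p. tl (cycle_form n p)"], rule bij_betw_byWitness)
  let ?A = "{p. cyclic_perm n p \<and> P (cycle_form n p)}"
  let ?B = "{w. distinct (1 # w) \<and> set (1 # w) = {1..n} \<and> P (1 # w)}"
  show "\<forall>p\<in>?A. cycle_of_list (1 # tl (cycle_form n p)) = p"
    using cycle_form_Cons_tl cycle_form_cyclic_perm(4) n by fastforce
  show "\<forall>w\<in>?B. tl (cycle_form n (cycle_of_list (1 # w))) = w"
    using cyclic_perm_cycle_of_list(2) by simp
  show "(\<lambda>p. tl (cycle_form n p)) ` ?A \<subseteq> ?B"
    using cycle_form_Cons_tl cycle_form_cyclic_perm(1,2) n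
    by (fastforce simp del: distinct.simps list.set)
  show "(\<lambda>w. cycle_of_list (1 # w)) ` ?B \<subseteq> ?A"
    using cyclic_perm_cycle_of_list by auto
qed

lemma graph_cyclic_perm:
  assumes "cyclic_perm n p" "cycle_form n p = 1 # w"
  shows "(\<lambda>x. (x, p x)) ` {1..n} = path_edges 1 w 1"
proof -
  let ?c = "1 # w"
  have "1 \<le> n" using assms(2) by (cases n) (auto simp: cycle_form_def)
  then have c: "distinct ?c" "set ?c = {1..n}" "cycle_of_list ?c = p"
    using cycle_form_cyclic_perm[OF assms(1)] assms(2) by auto
  have "map p ?c = rotate1 ?c" using cyclic_rotation[OF c(1), of 1] c(3) by simp
  then have "path_edges 1 w 1 = set (zip ?c (map p ?c))" by (simp add: path_edges_def)
  also have "\<dots> = (\<lambda>x. (x, p x)) ` set ?c" by (simp add: zip_map2 zip_same_conv_map image_image)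
  also have "\<dots> = (\<lambda>x. (x, p x)) ` {1..n}" by (simp only: c(2))
  finally show ?thesis by (rule sym)
qed

section \<open>Rotations of a cycle form avoiding 1324\<close>

(* Read in c, the occurrence becomes 1324, 3241, 2413 or 4132, depending on which of its
   positions wrap around; the first three contain 213. *)
lemma contains_1324_rotate_imp:
  assumes occ: "contains_pat (rotate r c) [1,3,2,4]" and r: "r < length c"
  shows "contains_pat c [2,1,3] \<or> contains_pat c [4,1,3,2]"
proof -
  define n where "n = length c"
  define g where "g i = (r + i) mod n" for i
  obtain a b e d where o: "a < b" "b < e" "e < d" "d < n"
    and v: "c ! g a < c ! g e" "c ! g e < c ! g b" "c ! g b < c ! g d"
    using occ unfolding contains_pat_1324_iff n_def g_def by (auto simp: nth_rotate)
  have g_less: "g i < n" for i using o(4) by (simp add: g_def)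
  have no_wrap: "g i = r + i" if "r + i < n" for i
    using that by (simp add: g_def)
  have wrap: "g i = r + i - n" if "n \<le> r + i" "i < n" for i
    using that r by (simp add: g_def n_def le_mod_geq)
  show ?thesis
  proof (cases "r + d < n \<or> n \<le> r + b")
    case True
    then have "g b < g e \<and> g e < g d"
    proof
      assume "r + d < n"
      then show ?thesis using o no_wrap[of b] no_wrap[of e] no_wrap[of d] by simp
    next
      assume "n \<le> r + b"
      then show ?thesis using o wrap[of b] wrap[of e] wrap[of d] by linarith
    qed
    then have "contains_pat c [2,1,3]"
      unfolding contains_pat_213_iff n_def using v(2,3) g_less[of d] n_def by blast
    then show ?thesis ..
  next
    case False
    show ?thesis
    proof (cases "n \<le> r + e")
      case True
      then have "g e < g a \<and> g a < g b"
        using False o no_wrap[of a] no_wrap[of b] wrap[of e] by linarith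
      then have "contains_pat c [2,1,3]"
        unfolding contains_pat_213_iff using v(1,2) g_less[of b] n_def by blast
      then show ?thesis ..
    next
      case False': False
      then have "g d < g a \<and> g a < g b \<and> g b < g e"
        using False o no_wrap[of a] no_wrap[of b] no_wrap[of e] wrap[of d] by linarith
      then have "contains_pat c [4,1,3,2]"
        unfolding contains_pat_4132_iff using v g_less[of e] n_def by (meson less_trans)
      then show ?thesis ..
    qed
  qed
qed

lemma contains_4132_imp_rotate_1324:
  assumes "contains_pat c [4,1,3,2]"
  shows "\<exists>r<length c. contains_pat (rotate r c) [1,3,2,4]"
proof -
  define n where "n = length c"
  obtain i j k l where o: "i < j" "j < k" "k < l" "l < n"
    "c ! j < c ! l" "c ! l < c ! k" "c ! k < c ! i"
    using assms unfolding contains_pat_4132_iff n_def by blast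
  have rot: "rotate j c ! p = c ! ((j + p) mod n)" if "p < n" for p
    using that by (simp add: nth_rotate n_def)
  have "rotate j c ! 0 = c ! j" "rotate j c ! (k - j) = c ! k" "rotate j c ! (l - j) = c ! l"
    using o rot[of 0] rot[of "k - j"] rot[of "l - j"] by simp_all
  moreover have "(j + (n + i - j)) mod n = i" using o by simp
  then have "rotate j c ! (n + i - j) = c ! i" using o rot[of "n + i - j"] by simp
  moreover have "0 < k - j" "k - j < l - j" "l - j < n + i - j" "n + i - j < length (rotate j c)"
    using o by (simp_all add: n_def)
  ultimately have "contains_pat (rotate j c) [1,3,2,4]"
    unfolding contains_pat_1324_iff using o(5-7)
    by (intro exI[of _ 0] exI[of _ "k - j"] exI[of _ "l - j"] exI[of _ "n + i - j"]) simp
  moreover have "j < length c" using o by (simp add: n_def)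
  ultimately show ?thesis by blast
qed

lemma contains_213_imp_Cons_1324:
  assumes "\<forall>y\<in>set w. x < y" "contains_pat w [2,1,3]"
  shows "contains_pat (x # w) [1,3,2,4]"
proof -
  obtain i j k where "i < j" "j < k" "k < length w" "w ! j < w ! i" "w ! i < w ! k"
    using assms(2) unfolding contains_pat_213_iff by blast
  moreover have "x < w ! j" using assms(1) \<open>j < k\<close> \<open>k < length w\<close> by simp
  ultimately show ?thesis
    unfolding contains_pat_1324_iff
    by (intro exI[of _ 0] exI[of _ "Suc i"] exI[of _ "Suc j"] exI[of _ "Suc k"]) simp
qed

lemma rotations_avoid_1324_iff:
  assumes min: "\<forall>y\<in>set w. x < y"
  shows "(\<forall>r<length (x # w). avoids (rotate r (x # w)) [1,3,2,4]) \<longleftrightarrow>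
    avoids w [2,1,3] \<and> avoids w [4,1,3,2]"
proof -
  have Cons_213: "contains_pat (x # w) [2,1,3] \<longleftrightarrow> contains_pat w [2,1,3]"
    using contains_pat_Cons_min[OF min, of 1] by simp
  have Cons_4132: "contains_pat (x # w) [4,1,3,2] \<longleftrightarrow> contains_pat w [4,1,3,2]"
    using contains_pat_Cons_min[OF min, of 1] by simp
  show ?thesis
  proof
    assume rot: "\<forall>r<length (x # w). avoids (rotate r (x # w)) [1,3,2,4]"
    then have "\<not> contains_pat w [2,1,3]"
      using contains_213_imp_Cons_1324[OF min] by (auto simp: avoids_def)
    moreover have "\<not> contains_pat w [4,1,3,2]"
      using rot contains_4132_imp_rotate_1324[of "x # w"] Cons_4132 by (auto simp: avoids_def)
    ultimately show "avoids w [2,1,3] \<and> avoids w [4,1,3,2]" by (simp add: avoids_def)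
  next
    assume "avoids w [2,1,3] \<and> avoids w [4,1,3,2]"
    then show "\<forall>r<length (x # w). avoids (rotate r (x # w)) [1,3,2,4]"
      using contains_1324_rotate_imp[of _ "x # w"] Cons_213 Cons_4132 by (auto simp: avoids_def)
  qed
qed

lemma cyclic_perm_conditions_iff:
  assumes cyc: "cyclic_perm n p" and c: "cycle_form n p = 1 # w"
  shows "avoids (one_line n p) (delta k) \<longleftrightarrow> \<not> decreasing_chain k (path_edges 1 w 1)"
    and "(\<forall>j<n. avoids (rotate j (cycle_form n p)) [1,3,2,4]) \<longleftrightarrow>
      avoids w [2,1,3] \<and> avoids w [4,1,3,2]"
proof -
  show "avoids (one_line n p) (delta k) \<longleftrightarrow> \<not> decreasing_chain k (path_edges 1 w 1)"
    unfolding avoids_def contains_delta_one_line_iff graph_cyclic_perm[OF cyc c] ..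
  have "1 \<le> n" using c by (cases n) (auto simp: cycle_form_def)
  then have dist: "distinct (1 # w)" and set_c: "set (1 # w) = {1..n}"
    using cycle_form_cyclic_perm(1,2)[OF cyc] c by simp_all
  have "1 \<notin> set w" "set w \<subseteq> {1..n}" using dist set_c by auto
  then have "\<forall>y\<in>set w. 1 < y" by (metis atLeastAtMost_iff le_neq_implies_less subsetD)
  moreover have "length (1 # w) = n" using distinct_card[OF dist] set_c by simp
  ultimately show "(\<forall>j<n. avoids (rotate j (cycle_form n p)) [1,3,2,4]) \<longleftrightarrow>
      avoids w [2,1,3] \<and> avoids w [4,1,3,2]"
    using rotations_avoid_1324_iff[of w 1] c by simp
qed

lemma a_circ_eq_card_avoiders:
  assumes "1 \<le> n"
  shows "a_circ n k =
    card {w \<in> avoiders_213_4132 2 (n - 1). \<not> decreasing_chain k (path_edges 1 w 1)}"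
proof -
  let ?Q = "\<lambda>c. \<not> decreasing_chain k (path_edges 1 (tl c) 1) \<and>
    avoids (tl c) [2,1,3] \<and> avoids (tl c) [4,1,3,2]"
  have cond: "avoids (one_line n p) (delta k) \<and>
      (\<forall>j<n. avoids (rotate j (cycle_form n p)) [1,3,2,4]) \<longleftrightarrow> ?Q (cycle_form n p)"
    if "cyclic_perm n p" for p
    using cyclic_perm_conditions_iff(1)[OF that cycle_form_Cons_tl[OF that assms], of k]
      cyclic_perm_conditions_iff(2)[OF that cycle_form_Cons_tl[OF that assms]] by blast
  have "a_circ n k = card {p. cyclic_perm n p \<and> ?Q (cycle_form n p)}"
    unfolding a_circ_def by (intro arg_cong[where f = card] Collect_cong) (use cond in blast)
  also have "\<dots> = card {w. distinct (1 # w) \<and> set (1 # w) = {1..n} \<and> ?Q (1 # w)}"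
    by (rule card_cyclic_perms[OF assms])
  also have "{w. distinct (1 # w) \<and> set (1 # w) = {1..n} \<and> ?Q (1 # w)} =
      {w \<in> avoiders_213_4132 2 (n - 1). \<not> decreasing_chain k (path_edges 1 w 1)}"
  proof -
    have ivl: "{2..<2 + (n - 1)} = {1..n} - {1}" and "1 \<in> {1..n}" using assms by auto
    then have "distinct (1 # w) \<and> set (1 # w) = {1..n} \<longleftrightarrow>
        distinct w \<and> set w = {2..<2 + (n - 1)}" for w
      unfolding ivl distinct.simps(2) list.set(2) by blast
    then show ?thesis by (auto simp: avoiders_213_4132_def)
  qed
  finally show ?thesis .
qed

theorem theorem3p1:
  fixes n :: nat
  assumes "n \<ge> 3"
  shows "a_circ n 3 = 2 ^ (n - 2) \<and> (\<forall>k \<ge> 4. a_circ n k = fib (2 * n - 3))"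
proof (intro conjI allI impI)
  have n: "1 \<le> n" "n - 1 = Suc (n - 2)" "2 * (n - 2) + 1 = 2 * n - 3" using assms by auto
  have one_two: "(1::nat) < 2" by simp
  have "a_circ n 3 = card (min_at_ends 2 (n - 1))"
    unfolding a_circ_eq_card_avoiders[OF n(1)]
      avoiders_without_decreasing_chain_3[OF one_two one_two] ..
  also have "\<dots> = 2 ^ (n - 2)"
    unfolding n(2) by (rule card_min_at_ends)
  finally show "a_circ n 3 = 2 ^ (n - 2)" .
  fix k :: nat assume "4 \<le> k"
  have "a_circ n k = card (avoiders_213_4132 2 (n - 1))"
    unfolding a_circ_eq_card_avoiders[OF n(1)]
      avoiders_without_decreasing_chain_ge_4[OF \<open>4 \<le> k\<close> one_two one_two] ..
  also have "\<dots> = fib (2 * (n - 2) + 1)"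
    unfolding n(2) by (rule card_avoiders_213_4132)
  finally show "a_circ n k = fib (2 * n - 3)"
    unfolding n(3) .
qed

end
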